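(* Let $\boldsymbol{\gamma}\ge 0$ be an uplink SINR vector such that $\mathbf{I}-\mathbf{F}(\boldsymbol{\gamma})$ and $\mathbf{I}-\mathbf{H}(\boldsymbol{\gamma})$ are invertible. Then $\boldsymbol{\gamma}$ is feasible, i.e. $0\le p_i(\boldsymbol{\gamma})\le p_i^{\max}$ for all $i\in\mathcal{M}$, if and only if $$0\le \Phi_m(\boldsymbol{\gamma})\le \Phi^{\max}_m(\boldsymbol{\gamma})\quad\text{for all } m\in\mathcal{B},$$ where $\boldsymbol{\Phi}(\boldsymbol{\gamma})=(\mathbf{I}-\mathbf{H}(\boldsymbol{\gamma}))^{-1}\mathbf{N}$ and $\Phi^{\max}_m(\boldsymbol{\gamma})=\min_{i\in\mathcal{M}^{\mathcal{B}}_m}\frac{p_i^{\max}h_{m,i}(\gamma_i+1)}{\gamma_i}$ (terms with $\gamma_i=0$, and the minimum over an empty set, being interpreted as $+\infty$).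
   Context: Uplink cellular model: users $\mathcal{M}=\{1,\dots,M\}$, BSs $\mathcal{B}=\{1,\dots,B\}$; user $i$ served by BS $b_i$, $\mathcal{M}^{\mathcal{B}}_m=\{i:b_i=m\}$. Uplink path gains $h_{m,i}>0$ (user $i$ to BS $m$), noise $N_m>0$ at BS $m$, maximum user powers $p_i^{\max}>0$. $\mathbf{p}(\boldsymbol{\gamma})=(\mathbf{I}-\mathbf{F}(\boldsymbol{\gamma}))^{-1}\mathbf{U}(\boldsymbol{\gamma})$ is the power vector achieving SINR vector $\boldsymbol{\gamma}$, where $U_i=\gamma_iN_{b_i}/h_{b_i,i}$, $F_{ii}=0$, $F_{ij}=\gamma_ih_{b_i,j}/h_{b_i,i}$ ($i\neq j$). With $\theta_i=\gamma_i/(\gamma_i+1)$, the $B\times B$ matrix $\mathbf{H}(\boldsymbol{\gamma})$ has $H_{mm}=\sum_{i\in\mathcal{M}^{\mathcal{B}}_m}\theta_i$ and $H_{mn}=\sum_{i\in\mathcal{M}^{\mathcal{B}}_n}\frac{h_{m,i}}{h_{n,i}}\theta_i$ for $m\ne n$; $\mathbf{N}=(N_1,\dots,N_B)^{\mathrm T}$. *)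

theory Defs
  imports "HOL-Analysis.Analysis"
begin

(* Users are indexed by a finite type 'u, base stations by a finite type 'b.
   bs i = b_i (serving BS of user i), h m i = h_{m,i} (gain user i -> BS m),
   N m = noise at BS m, pmax i = maximal power of user i. *)

definition Umat :: "('u::finite \<Rightarrow> 'b::finite) \<Rightarrow> ('b \<Rightarrow> 'u \<Rightarrow> real) \<Rightarrow> ('b \<Rightarrow> real)
    \<Rightarrow> real^'u \<Rightarrow> real^'u" where
  "Umat bs h N \<gamma> = (\<chi> i. \<gamma>$i * N (bs i) / h (bs i) i)"

definition Fmat :: "('u::finite \<Rightarrow> 'b::finite) \<Rightarrow> ('b \<Rightarrow> 'u \<Rightarrow> real)
    \<Rightarrow> real^'u \<Rightarrow> real^'u^'u" where
  "Fmat bs h \<gamma> = (\<chi> i j. if i = j then 0 else \<gamma>$i * h (bs i) j / h (bs i) i)"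

definition pvec :: "('u::finite \<Rightarrow> 'b::finite) \<Rightarrow> ('b \<Rightarrow> 'u \<Rightarrow> real) \<Rightarrow> ('b \<Rightarrow> real)
    \<Rightarrow> real^'u \<Rightarrow> real^'u" where
  "pvec bs h N \<gamma> = matrix_inv (mat 1 - Fmat bs h \<gamma>) *v Umat bs h N \<gamma>"

definition theta :: "real^'u::finite \<Rightarrow> 'u \<Rightarrow> real" where
  "theta \<gamma> i = \<gamma>$i / (\<gamma>$i + 1)"

definition Hmat :: "('u::finite \<Rightarrow> 'b::finite) \<Rightarrow> ('b \<Rightarrow> 'u \<Rightarrow> real)
    \<Rightarrow> real^'u \<Rightarrow> real^'b^'b" where
  "Hmat bs h \<gamma> = (\<chi> m n. if m = n then (\<Sum>i\<in>{i. bs i = m}. theta \<gamma> i)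
                      else (\<Sum>i\<in>{i. bs i = n}. h m i / h n i * theta \<gamma> i))"

definition Nvec :: "('b::finite \<Rightarrow> real) \<Rightarrow> real^'b" where
  "Nvec N = (\<chi> m. N m)"

definition Phi :: "('u::finite \<Rightarrow> 'b::finite) \<Rightarrow> ('b \<Rightarrow> 'u \<Rightarrow> real) \<Rightarrow> ('b \<Rightarrow> real)
    \<Rightarrow> real^'u \<Rightarrow> real^'b" where
  "Phi bs h N \<gamma> = matrix_inv (mat 1 - Hmat bs h \<gamma>) *v Nvec N"

(* Phi^max_m as an extended real: terms with gamma_i = 0 count as +infinity,
   and the infimum over an empty set is +infinity. *)
definition Phi_max :: "('u::finite \<Rightarrow> 'b::finite) \<Rightarrow> ('b \<Rightarrow> 'u \<Rightarrow> real) \<Rightarrow> ('u \<Rightarrow> real)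
    \<Rightarrow> real^'u \<Rightarrow> 'b \<Rightarrow> ereal" where
  "Phi_max bs h pmax \<gamma> m = (INF i\<in>{i. bs i = m}.
      (if \<gamma>$i = 0 then \<infinity> else ereal (pmax i * h m i * (\<gamma>$i + 1) / \<gamma>$i)))"

end

theory Submission
  imports Defs
begin

text \<open>
  Let \<open>q m = N m + (\<Sum>j. h m j * p j)\<close> be the total power received at base
  station \<open>m\<close>. The SINR equations \<open>(I - F \<gamma>) p = U \<gamma>\<close> say exactly that
  \<open>p i = \<theta> i * q (bs i) / h (bs i) i\<close>; substituting this into the definition of
  \<open>q\<close> gives \<open>q = N + H \<gamma> q\<close>, so \<open>\<Phi> \<gamma> = q\<close>. Feasibility of user \<open>i\<close> thus
  becomes a bound on \<open>q (bs i)\<close>, and the bounds of all users of base station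
  \<open>m\<close> combine into \<open>\<Phi>\<^sup>m\<^sup>a\<^sup>x m\<close>. Nonnegativity transfers because \<open>q\<close> is a
  positive combination of the powers and the powers are nonnegative multiples of \<open>q\<close>.
\<close>

lemma invertible_mult_matrix_inv_vector:
  fixes A :: "real^'n^'n"
  assumes "invertible A"
  shows "A *v (matrix_inv A *v b) = b"
proof -
  have "A ** matrix_inv A = mat 1"
    using assms unfolding invertible_def matrix_inv_def by (rule someI2_ex) blast
  then show ?thesis by (metis matrix_vector_mul_assoc matrix_vector_mul_lid)
qed

lemma matrix_inv_mult_vector_eqI:
  fixes A :: "real^'n^'n"
  assumes "invertible A" "A *v x = b"
  shows "matrix_inv A *v b = x"
proof -
  have "matrix_inv A ** A = mat 1"
    using assms(1) unfolding invertible_def matrix_inv_def by (rule someI2_ex) blast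
  then show ?thesis using assms(2) by (metis matrix_vector_mul_assoc matrix_vector_mul_lid)
qed

definition received_power :: "('b \<Rightarrow> 'u::finite \<Rightarrow> real) \<Rightarrow> ('b \<Rightarrow> real) \<Rightarrow> real^'u \<Rightarrow> 'b \<Rightarrow> real"
  where "received_power h N p m = N m + (\<Sum>j\<in>UNIV. h m j * p$j)"

lemma Fmat_solution_balance:
  assumes h_nz: "h (bs i) i \<noteq> 0"
    and sol: "(mat 1 - Fmat bs h \<gamma>) *v p = Umat bs h N \<gamma>"
  shows "h (bs i) i * p$i * (1 + \<gamma>$i) = \<gamma>$i * received_power h N p (bs i)"
proof -
  let ?c = "\<gamma>$i / h (bs i) i"
  have "((mat 1 - Fmat bs h \<gamma>) *v p)$i
        = (\<Sum>j\<in>UNIV. (if j = i then p$i else 0) - ?c * (h (bs i) j * p$j)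
                     + (if j = i then ?c * (h (bs i) i * p$i) else 0))"
    unfolding matrix_vector_mult_def by (auto simp: Fmat_def mat_def intro!: sum.cong)
  also have "\<dots> = p$i - ?c * (\<Sum>j\<in>UNIV. h (bs i) j * p$j) + ?c * (h (bs i) i * p$i)"
    by (simp add: sum.distrib sum_subtractf sum_distrib_left)
  finally have "p$i - ?c * (\<Sum>j\<in>UNIV. h (bs i) j * p$j) + ?c * (h (bs i) i * p$i)
                = \<gamma>$i * N (bs i) / h (bs i) i"
    using sol by (simp add: Umat_def)
  then have "h (bs i) i * p$i - \<gamma>$i * (\<Sum>j\<in>UNIV. h (bs i) j * p$j) + \<gamma>$i * (h (bs i) i * p$i)
             = \<gamma>$i * N (bs i)"
    using h_nz by (simp add: field_simps)
  then show ?thesis by (simp add: received_power_def algebra_simps)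
qed

lemma pvec_eq_theta_received_power:
  assumes h_pos: "\<And>m i. h m i > 0"
    and gamma_nonneg: "\<And>i. \<gamma>$i \<ge> 0"
    and invF: "invertible (mat 1 - Fmat bs h \<gamma>)"
  shows "pvec bs h N \<gamma> $ i = theta \<gamma> i * received_power h N (pvec bs h N \<gamma>) (bs i) / h (bs i) i"
proof -
  have "(mat 1 - Fmat bs h \<gamma>) *v pvec bs h N \<gamma> = Umat bs h N \<gamma>"
    unfolding pvec_def by (rule invertible_mult_matrix_inv_vector[OF invF])
  then have "h (bs i) i * pvec bs h N \<gamma> $ i * (1 + \<gamma>$i)
             = \<gamma>$i * received_power h N (pvec bs h N \<gamma>) (bs i)"
    using h_pos[of "bs i" i] by (intro Fmat_solution_balance) auto
  moreover have "0 < h (bs i) i * (1 + \<gamma>$i)"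
    using h_pos[of "bs i" i] gamma_nonneg[of i] by simp
  ultimately show ?thesis by (simp add: theta_def field_simps)
qed

text \<open>The off-diagonal formula of \<open>H(\<gamma>)\<close> also covers the diagonal, since \<open>h\<^sub>m\<^sub>,\<^sub>i / h\<^sub>m\<^sub>,\<^sub>i = 1\<close>.\<close>

lemma Hmat_entry:
  assumes h_pos: "\<And>m i. h m i > 0"
  shows "Hmat bs h \<gamma> $ m $ n = (\<Sum>i\<in>{i. bs i = n}. h m i / h n i * theta \<gamma> i)"
proof -
  have "h m i \<noteq> 0" for i using h_pos[of m i] by simp
  then show ?thesis by (auto simp: Hmat_def intro!: sum.cong)
qed

lemma Hmat_mult_received_power:
  assumes h_pos: "\<And>m i. h m i > 0"
    and p_eq: "\<And>i. p$i = theta \<gamma> i * received_power h N p (bs i) / h (bs i) i"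
  shows "(Hmat bs h \<gamma> *v (\<chi> n. received_power h N p n))$m = (\<Sum>j\<in>UNIV. h m j * p$j)"
proof -
  have "(Hmat bs h \<gamma> *v (\<chi> n. received_power h N p n))$m
        = (\<Sum>n\<in>UNIV. (\<Sum>i\<in>{i. bs i = n}. h m i / h n i * theta \<gamma> i) * received_power h N p n)"
    by (simp add: matrix_vector_mult_def Hmat_entry[OF h_pos])
  also have "\<dots> = (\<Sum>n\<in>UNIV. \<Sum>i\<in>{i. i \<in> UNIV \<and> bs i = n}. h m i * p$i)"
    unfolding sum_distrib_right by (intro sum.cong) (auto simp: p_eq)
  also have "\<dots> = (\<Sum>j\<in>UNIV. h m j * p$j)"
    by (rule sum.group) auto
  finally show ?thesis .
qed

lemma Phi_eq_received_power:
  assumes h_pos: "\<And>m i. h m i > 0"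
    and gamma_nonneg: "\<And>i. \<gamma>$i \<ge> 0"
    and invF: "invertible (mat 1 - Fmat bs h \<gamma>)"
    and invH: "invertible (mat 1 - Hmat bs h \<gamma>)"
  shows "Phi bs h N \<gamma> $ m = received_power h N (pvec bs h N \<gamma>) m"
proof -
  let ?q = "\<chi> n. received_power h N (pvec bs h N \<gamma>) n"
  have "(mat 1 - Hmat bs h \<gamma>) *v ?q = Nvec N"
    using Hmat_mult_received_power[OF h_pos pvec_eq_theta_received_power[OF h_pos gamma_nonneg invF]]
    by (simp add: vec_eq_iff matrix_vector_mult_diff_rdistrib Nvec_def received_power_def)
  then have "Phi bs h N \<gamma> = ?q"
    unfolding Phi_def by (rule matrix_inv_mult_vector_eqI[OF invH])
  then show ?thesis by simp
qed

lemma received_power_nonneg_iff: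
  assumes h_pos: "\<And>m i. h m i > 0"
    and N_pos: "\<And>m. N m > 0"
    and gamma_nonneg: "\<And>i. \<gamma>$i \<ge> 0"
    and p_eq: "\<And>i. p$i = theta \<gamma> i * received_power h N p (bs i) / h (bs i) i"
  shows "(\<forall>i. 0 \<le> p$i) \<longleftrightarrow> (\<forall>m. 0 \<le> received_power h N p m)"
proof
  assume "\<forall>i. 0 \<le> p$i"
  then show "\<forall>m. 0 \<le> received_power h N p m"
    unfolding received_power_def
    using N_pos h_pos by (auto intro!: add_nonneg_nonneg sum_nonneg mult_nonneg_nonneg simp: less_imp_le)
next
  assume q_nonneg: "\<forall>m. 0 \<le> received_power h N p m"
  show "\<forall>i. 0 \<le> p$i"
  proof
    fix i
    have "0 \<le> theta \<gamma> i" using gamma_nonneg[of i] by (simp add: theta_def)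
    then show "0 \<le> p$i" by (subst p_eq) (use q_nonneg h_pos[of "bs i" i] in simp)
  qed
qed

lemma ereal_le_Phi_max_iff:
  "ereal x \<le> Phi_max bs h pmax \<gamma> m \<longleftrightarrow>
     (\<forall>i. bs i = m \<and> \<gamma>$i \<noteq> 0 \<longrightarrow> x \<le> pmax i * h m i * (\<gamma>$i + 1) / \<gamma>$i)"
  unfolding Phi_max_def le_INF_iff by auto

lemma theta_power_le_iff:
  fixes g hh pm q :: real
  assumes "0 \<le> g" "0 < hh" "0 < pm"
  shows "g / (g + 1) * q / hh \<le> pm \<longleftrightarrow> (g \<noteq> 0 \<longrightarrow> q \<le> pm * hh * (g + 1) / g)"
proof (cases "g = 0")
  case False
  then have "0 < g" "0 < (g + 1) * hh" using assms by auto
  then show ?thesis by (simp add: pos_divide_le_eq pos_le_divide_eq mult.commute mult.left_commute)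
qed (use assms in simp)

theorem corollary1:
  fixes bs :: "'u::finite \<Rightarrow> 'b::finite"
    and h :: "'b \<Rightarrow> 'u \<Rightarrow> real"
    and N :: "'b \<Rightarrow> real"
    and pmax :: "'u \<Rightarrow> real"
    and \<gamma> :: "real^'u"
  assumes h_pos: "\<And>m i. h m i > 0"
    and N_pos: "\<And>m. N m > 0"
    and pmax_pos: "\<And>i. pmax i > 0"
    and gamma_nonneg: "\<And>i. \<gamma>$i \<ge> 0"
    and invF: "invertible (mat 1 - Fmat bs h \<gamma>)"
    and invH: "invertible (mat 1 - Hmat bs h \<gamma>)"
  shows "(\<forall>i. 0 \<le> pvec bs h N \<gamma> $ i \<and> pvec bs h N \<gamma> $ i \<le> pmax i) \<longleftrightarrow>
         (\<forall>m. 0 \<le> Phi bs h N \<gamma> $ m \<and> ereal (Phi bs h N \<gamma> $ m) \<le> Phi_max bs h pmax \<gamma> m)"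
proof -
  define p where "p = pvec bs h N \<gamma>"
  define q where "q = received_power h N p"
  have p_eq: "p$i = theta \<gamma> i * q (bs i) / h (bs i) i" for i
    unfolding p_def q_def by (rule pvec_eq_theta_received_power[OF h_pos gamma_nonneg invF])
  have Phi_eq: "Phi bs h N \<gamma> $ m = q m" for m
    unfolding p_def q_def by (rule Phi_eq_received_power[OF h_pos gamma_nonneg invF invH])
  have p_le_iff: "p$i \<le> pmax i \<longleftrightarrow> (\<gamma>$i \<noteq> 0 \<longrightarrow> q (bs i) \<le> pmax i * h (bs i) i * (\<gamma>$i + 1) / \<gamma>$i)"
    for i
    unfolding p_eq theta_def by (rule theta_power_le_iff[OF gamma_nonneg h_pos pmax_pos])
  have "(\<forall>i. 0 \<le> p$i) \<longleftrightarrow> (\<forall>m. 0 \<le> q m)"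
    unfolding q_def using received_power_nonneg_iff[OF h_pos N_pos gamma_nonneg p_eq[unfolded q_def]] .
  then show ?thesis
    unfolding p_def[symmetric] Phi_eq ereal_le_Phi_max_iff p_le_iff by auto
qed

end
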